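(* Let $\epsilon\in(0,1)$ and let $n$ be a positive integer, and set $c=Q^{-1}(\epsilon)/\sqrt{n}$, where $Q^{-1}$ is the inverse of the Gaussian $Q$-function. Define, for $\gamma\geq 0$, \[ f(\gamma)=\ln(1+\gamma)-c\sqrt{\frac{2\gamma}{1+\gamma}} . \] Then $f$ is increasing in $\gamma$ on the set $\gamma\geq\bar{\gamma}$, where $\bar{\gamma}=\frac{1}{2}\left(\sqrt{1+2c^{2}}-1\right)$.
   Context: $f(\gamma)$ is the finite-block-length (normal approximation) rate of a user with SINR $\gamma$, block length $n$ and maximum tolerable decoding error probability $\epsilon$, using channel dispersion $v=2\gamma/(1+\gamma)$, i.e. $f(\gamma)=\ln(1+\gamma)-Q^{-1}(\epsilon)\sqrt{v/n}$. *)

theory Defs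
  imports "HOL-Probability.Probability"
begin

definition Qfunc :: "real \<Rightarrow> real" where
  "Qfunc x = (LINT t:{x..}|lborel. std_normal_density t)"

text \<open>Inverse of the Q-function (Q is a strictly decreasing bijection from the reals onto (0,1)).\<close>
definition Qinv :: "real \<Rightarrow> real" where
  "Qinv e = (THE x. Qfunc x = e)"

end

theory Submission
  imports Defs
begin

text \<open>Since \<open>sqrt (2\<gamma>/(1+\<gamma>)) * (1+\<gamma>) = sqrt (2\<gamma>(1+\<gamma>))\<close>, the derivative of
  \<open>ln (1+\<gamma>) - c sqrt (2\<gamma>/(1+\<gamma>))\<close> is \<open>(1 - c / sqrt (2\<gamma>(1+\<gamma>))) / (1+\<gamma>)\<close>.
  It is positive as soon as \<open>c\<^sup>2 < 2\<gamma>(1+\<gamma>)\<close>, i.e. for \<open>\<gamma>\<close> beyond the positive root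
  \<open>(sqrt (1+2c\<^sup>2) - 1)/2\<close> of \<open>2\<gamma>\<^sup>2 + 2\<gamma> - c\<^sup>2\<close>. The value of \<open>c\<close> plays no role.\<close>

lemma sqrt_dispersion_has_real_derivative:
  fixes x :: real
  assumes "0 < x"
  shows "((\<lambda>\<gamma>. sqrt (2 * \<gamma> / (1 + \<gamma>))) has_real_derivative
           1 / (sqrt (2 * x * (1 + x)) * (1 + x))) (at x)"
proof -
  define s where "s = sqrt (2 * x / (1 + x))"
  have "0 < s" using assms by (simp add: s_def)
  have "s * (1 + x) = sqrt (2 * x / (1 + x) * (1 + x)\<^sup>2)"
    using assms by (simp only: s_def real_sqrt_mult real_sqrt_abs)
  also have "2 * x / (1 + x) * (1 + x)\<^sup>2 = 2 * x * (1 + x)"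
    using assms by (simp add: field_simps power2_eq_square)
  finally have s_mult: "s * (1 + x) = sqrt (2 * x * (1 + x))" .
  have "((\<lambda>\<gamma>. sqrt (2 * \<gamma> / (1 + \<gamma>))) has_real_derivative
          inverse s / 2 * (2 / (1 + x)\<^sup>2)) (at x)"
    unfolding s_def using assms
    by (auto intro!: derivative_eq_intros simp: field_simps power2_eq_square)
  then show ?thesis
    unfolding s_mult[symmetric]
    by (rule DERIV_cong) (use \<open>0 < s\<close> assms in \<open>simp add: field_simps power2_eq_square\<close>)
qed

lemma rate_has_real_derivative:
  fixes c x :: real
  assumes "0 < x"
  shows "((\<lambda>\<gamma>. ln (1 + \<gamma>) - c * sqrt (2 * \<gamma> / (1 + \<gamma>))) has_real_derivative
           (1 - c / sqrt (2 * x * (1 + x))) / (1 + x)) (at x)"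
proof -
  have "((\<lambda>\<gamma>. ln (1 + \<gamma>)) has_real_derivative 1 / (1 + x)) (at x)"
    using assms by (auto intro!: derivative_eq_intros)
  from DERIV_diff[OF this DERIV_cmult[OF sqrt_dispersion_has_real_derivative[OF assms]]]
  show ?thesis
    by (rule DERIV_cong) (simp add: diff_divide_distrib)
qed

lemma threshold_less_imp_pos_and_less_sqrt:
  fixes c x :: real
  assumes "(sqrt (1 + 2 * c\<^sup>2) - 1) / 2 < x"
  shows "0 < x" and "c < sqrt (2 * x * (1 + x))"
proof -
  have root_lt: "sqrt (1 + 2 * c\<^sup>2) < 2 * x + 1" using assms by simp
  moreover have "1 \<le> sqrt (1 + 2 * c\<^sup>2)" by simp
  ultimately show "0 < x" by linarith
  have "(sqrt (1 + 2 * c\<^sup>2))\<^sup>2 < (2 * x + 1)\<^sup>2"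
    using root_lt by (intro power_strict_mono) auto
  then have "c\<^sup>2 < 2 * x * (1 + x)" by (simp add: power2_eq_square algebra_simps)
  then show "c < sqrt (2 * x * (1 + x))" by (rule real_less_rsqrt)
qed

lemma rate_strict_mono_on_above_threshold:
  fixes c :: real
  shows "strict_mono_on {(sqrt (1 + 2 * c\<^sup>2) - 1) / 2 ..}
           (\<lambda>\<gamma>. ln (1 + \<gamma>) - c * sqrt (2 * \<gamma> / (1 + \<gamma>)))"
proof (rule strict_mono_onI)
  fix a b :: real
  assume a: "a \<in> {(sqrt (1 + 2 * c\<^sup>2) - 1) / 2 ..}" and "b \<in> {(sqrt (1 + 2 * c\<^sup>2) - 1) / 2 ..}"
    and "a < b"
  have "0 \<le> (sqrt (1 + 2 * c\<^sup>2) - 1) / 2" by simp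
  also have "\<dots> \<le> a" using a by simp
  finally have "0 \<le> a" .
  show "ln (1 + a) - c * sqrt (2 * a / (1 + a)) < ln (1 + b) - c * sqrt (2 * b / (1 + b))"
  proof (rule DERIV_pos_imp_increasing_open[OF \<open>a < b\<close>])
    fix x assume "a < x" "x < b"
    with a have "(sqrt (1 + 2 * c\<^sup>2) - 1) / 2 < x" by simp
    note x = threshold_less_imp_pos_and_less_sqrt[OF this]
    have "0 < sqrt (2 * x * (1 + x))" using x(1) by simp
    with x have "0 < (1 - c / sqrt (2 * x * (1 + x))) / (1 + x)"
      by (simp add: divide_less_eq)
    with rate_has_real_derivative[OF x(1)]
    show "\<exists>y. ((\<lambda>\<gamma>. ln (1 + \<gamma>) - c * sqrt (2 * \<gamma> / (1 + \<gamma>))) has_real_derivative y) (at x)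
              \<and> 0 < y"
      by blast
  next
    show "continuous_on {a..b} (\<lambda>\<gamma>. ln (1 + \<gamma>) - c * sqrt (2 * \<gamma> / (1 + \<gamma>)))"
      using \<open>0 \<le> a\<close> by (intro continuous_intros) auto
  qed
qed

theorem lemma1:
  fixes \<epsilon> :: real and n :: nat and c :: real
  assumes "0 < \<epsilon>" and "\<epsilon> < 1" and "0 < n"
    and "c = Qinv \<epsilon> / sqrt (real n)"
  shows "strict_mono_on {(sqrt (1 + 2 * c\<^sup>2) - 1) / 2 ..}
           (\<lambda>\<gamma>::real. ln (1 + \<gamma>) - c * sqrt (2 * \<gamma> / (1 + \<gamma>)))"
  by (rule rate_strict_mono_on_above_threshold)

end
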